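(* Consider the time-minimization problem $T\to\min$ for the control system on the upper half-plane $L^2=\{(x,y)\in\mathbb{R}^2: y>0\}$ $$\dot x = y u_1,\qquad \dot y = y u_2,\qquad u=(u_1,u_2)\in\Omega,$$ where $\Omega\subset\mathbb{R}^2$ is a convex compact set with $0\in\operatorname{int}\Omega$. Every geodesic (trajectory of an extremal given by the Pontryagin maximum principle for this problem) is of one of the following two types: (h) Horizontal geodesics: such a geodesic is obtained from the polar set $\Omega^\circ$ by (i) rotating $\Omega^\circ$ by $+90^\circ$ or $-90^\circ$ about the origin, (ii) stretching it by a factor $\lambda>0$, (iii) taking the part of the boundary of the resulting set lying in the upper half-plane, and (iv) translating this part horizontally by an arbitrary distance; the geodesic moves along (a piece of) this curve. If $\Omega^\circ$ was rotated clockwise then the motion along the geodesic is counterclockwise, and vice versa. (v) Vertical geodesics: a vertical geodesic moving up is obtained by choosing an arbitrary measurable control $u(t)\in\Omega$ such that, for a.e. $t$, $u(t)$ has the maximal possible $u_2$-coordinate among points of $\Omega$ (so $u_2$ is a constant); the corresponding geodesic starting at $(x_0,y_0)$ is $$x(t)=x_0+y_0\int_0^t e^{u_2 s}u_1(s)\,ds,\qquad y(t)=y_0e^{u_2 t}.$$ Vertical geodesics moving down are constructed in the same way, taking $u(t)\in\Omega$ with the minimal possible $u_2$-coordinate in $\Omega$ for all $t$.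
   Context: The polar set of $\Omega$ is $\Omega^\circ=\{(p,q)\in\mathbb{R}^2: px+qy\le 1 \text{ for all } (x,y)\in\Omega\}$. The problem defines a Finsler structure on $L^2$ in which the length of a tangent vector $(\xi,\eta)$ at $(x,y)$ is $y\,\mu_\Omega(\xi,\eta)$, $\mu_\Omega$ being the Minkowski gauge of $\Omega$. *)

theory Defs
  imports "HOL-Analysis.Analysis"
begin

definition polar :: "(real \<times> real) set \<Rightarrow> (real \<times> real) set" where
  "polar \<Omega> = {(p, q). \<forall>(a, b) \<in> \<Omega>. p * a + q * b \<le> 1}"

text \<open>Rotation by sigma * 90 degrees about the origin (sigma = 1: counterclockwise,
  i.e. +90 degrees; sigma = -1: clockwise, i.e. -90 degrees).\<close>
definition rot90 :: "real \<Rightarrow> real \<times> real \<Rightarrow> real \<times> real" where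
  "rot90 \<sigma> v = (- \<sigma> * snd v, \<sigma> * fst v)"

text \<open>Pontryagin extremal on the time interval [0,T] for the time-minimal problem
  x' = y u1, y' = y u2, u \<in> \<Omega>, on the upper half-plane, with Hamiltonian
  H = y (p u1 + q u2). The covector (p,q) satisfies p' = -dH/dx = 0 and
  q' = -dH/dy = -(p u1 + q u2); it never vanishes; the control maximizes H a.e.;
  and the maximum of H is a non-negative constant a.e.
  All ODEs are in integral (absolutely continuous / Caratheodory) form.\<close>
definition extremal ::
  "(real \<times> real) set \<Rightarrow> real \<Rightarrow> (real \<Rightarrow> real \<times> real) \<Rightarrow> (real \<Rightarrow> real) \<Rightarrow> (real \<Rightarrow> real)
    \<Rightarrow> (real \<Rightarrow> real) \<Rightarrow> (real \<Rightarrow> real) \<Rightarrow> bool" where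
  "extremal \<Omega> T u x y p q \<longleftrightarrow>
     u \<in> borel_measurable (lebesgue_on {0..T}) \<and>
     (\<forall>t\<in>{0..T}. u t \<in> \<Omega>) \<and>
     (\<forall>t\<in>{0..T}. y t > 0) \<and>
     (\<forall>t\<in>{0..T}. ((\<lambda>s. y s * fst (u s)) has_integral (x t - x 0)) {0..t}) \<and>
     (\<forall>t\<in>{0..T}. ((\<lambda>s. y s * snd (u s)) has_integral (y t - y 0)) {0..t}) \<and>
     (\<forall>t\<in>{0..T}. p t = p 0) \<and>
     (\<forall>t\<in>{0..T}. ((\<lambda>s. - (p s * fst (u s) + q s * snd (u s))) has_integral (q t - q 0)) {0..t}) \<and>
     (\<forall>t\<in>{0..T}. (p t, q t) \<noteq> (0, 0)) \<and>
     (AE t in lebesgue. t \<in> {0..T} \<longrightarrow>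
        (\<forall>v\<in>\<Omega>. y t * (p t * fst v + q t * snd v) \<le> y t * (p t * fst (u t) + q t * snd (u t)))) \<and>
     (\<exists>h\<ge>0. AE t in lebesgue. t \<in> {0..T} \<longrightarrow>
        y t * (p t * fst (u t) + q t * snd (u t)) = h)"

end

theory Submission
  imports Defs
begin

(* If p = 0 then q never vanishes, hence has a fixed
   sign, and the maximum condition forces u2 to be the largest (q > 0) or smallest (q < 0)
   value of u2 on Omega; then y' = M y integrates explicitly.  If p <> 0, p x + q y is a first
   integral, so x - c = - q y / p for a constant c.  The maximized Hamiltonian h = y <(p,q), u>
   is positive because 0 is interior to Omega, and the normalized covector (y/h) (p,q) satisfies
   <(y/h) (p,q), v> <= 1 on Omega with equality at v = u, so it lies on the boundary of the
   polar set.  Since (x - c, y) = (h/p) (- (y/h) q, (y/h) p), the trajectory runs along that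
   boundary rotated by sgn p * 90 degrees and scaled by h/|p|, and the cross product
   (x - c) y' - y x' = - y h / p has the sign opposite to the rotation. *)

definition primitive_on :: "real \<Rightarrow> (real \<Rightarrow> real) \<Rightarrow> (real \<Rightarrow> real) \<Rightarrow> bool" where
  "primitive_on T X f \<longleftrightarrow> (\<forall>t\<in>{0..T}. (f has_integral (X t - X 0)) {0..t})"

lemma primitive_on_eq_integral:
  assumes "primitive_on T X f" "t \<in> {0..T}"
  shows "X t = X 0 + integral {0..t} f"
  using assms integral_unique unfolding primitive_on_def by (metis add.commute diff_add_cancel)

lemma primitive_on_has_integral_interval:
  assumes "primitive_on T X f" "0 \<le> a" "a \<le> b" "b \<le> T"
  shows "(f has_integral (X b - X a)) {a..b}"
proof -
  have f_b: "(f has_integral (X b - X 0)) {0..b}" and f_a: "(f has_integral (X a - X 0)) {0..a}"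
    using assms unfolding primitive_on_def by auto
  obtain j where j: "(f has_integral j) {a..b}"
    using integrable_subinterval_real[of f 0 b a b] f_b assms(2) by auto
  have "X b - X 0 = X a - X 0 + j"
    using has_integral_unique[OF f_b has_integral_combine[OF assms(2,3) f_a j]] .
  then show ?thesis
    using j by simp
qed

lemma continuous_on_primitive:
  assumes "primitive_on T X f"
  shows "continuous_on {0..T} X"
proof (cases "0 \<le> T")
  case True
  then have "f integrable_on {0..T}"
    using assms unfolding primitive_on_def by auto
  then have "continuous_on {0..T} (\<lambda>t. X 0 + integral {0..t} f)"
    by (intro continuous_intros indefinite_integral_continuous_1)
  then show ?thesis
    by (rule continuous_on_eq) (metis primitive_on_eq_integral[OF assms])
qed simp

lemma primitive_on_cong_AE:
  assumes "primitive_on T X f" "AE t in lebesgue. t \<in> {0..T} \<longrightarrow> f t = g t"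
  shows "primitive_on T X g"
  unfolding primitive_on_def
proof
  fix t assume t: "t \<in> {0..T}"
  have "AE s in lborel. s \<in> {0..t} \<longrightarrow> f s = g s"
    using assms(2) t unfolding AE_completion_iff by (auto elim!: eventually_mono)
  then show "(g has_integral (X t - X 0)) {0..t}"
    using assms(1) t has_integral_AE unfolding primitive_on_def by blast
qed

lemma primitive_on_linear_imp_exp:
  assumes "primitive_on T Y (\<lambda>s. M * Y s)" "t \<in> {0..T}"
  shows "Y t = Y 0 * exp (M * t)"
proof -
  have cont: "continuous_on {0..T} (\<lambda>s. M * Y s)"
    using continuous_on_primitive[OF assms(1)] by (intro continuous_intros)
  have Y_deriv: "(Y has_real_derivative M * Y s) (at s within {0..T})" if s: "s \<in> {0..T}" for s
  proof (rule has_field_derivative_transform_within)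
    show "((\<lambda>t. Y 0 + integral {0..t} (\<lambda>s. M * Y s)) has_real_derivative M * Y s) (at s within {0..T})"
      using DERIV_add[OF DERIV_const integral_has_real_derivative[OF cont s]] by simp
    show "Y 0 + integral {0..s'} (\<lambda>s. M * Y s) = Y s'" if "s' \<in> {0..T}" "dist s' s < 1" for s'
      using primitive_on_eq_integral[OF assms(1) that(1)] by simp
  qed (use s in simp_all)
  have "((\<lambda>s. Y s * exp (- (M * s))) has_real_derivative 0) (at s within {0..T})"
    if "s \<in> {0..T}" for s
  proof -
    have "((\<lambda>s. exp (- (M * s))) has_real_derivative exp (- (M * s)) * (- M)) (at s within {0..T})"
      by (auto intro!: derivative_eq_intros)
    from DERIV_mult[OF Y_deriv[OF that] this] show ?thesis
      by (simp add: algebra_simps)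
  qed
  then obtain C where "\<forall>s\<in>{0..T}. Y s * exp (- (M * s)) = C"
    using has_field_derivative_zero_constant[OF convex_real_interval(5)] by blast
  moreover have "0 \<in> {0..T}"
    using assms(2) by simp
  ultimately have "Y t * exp (- (M * t)) = Y 0"
    using assms(2) by (metis exp_zero mult_1_right mult_zero_right neg_0_equal_iff_equal)
  then show ?thesis
    by (metis exp_minus_inverse mult.assoc mult.commute mult_1_right)
qed

lemma constant_if_increments_small:
  fixes F :: "real \<Rightarrow> real"
  assumes small: "\<And>\<epsilon>. \<epsilon> > 0 \<Longrightarrow> \<exists>\<delta>>0. \<forall>a\<in>{l..r}. \<forall>b\<in>{l..r}.
      a \<le> b \<longrightarrow> b - a < \<delta> \<longrightarrow> \<bar>F b - F a\<bar> \<le> \<epsilon> * (b - a)"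
    and "t \<in> {l..r}"
  shows "F t = F l"
proof -
  have "(F has_real_derivative 0) (at s within {l..r})" if s: "s \<in> {l..r}" for s
    unfolding has_field_derivative_iff tendsto_iff eventually_at
  proof (intro allI impI)
    fix \<epsilon> :: real assume "\<epsilon> > 0"
    then obtain \<delta> where "\<delta> > 0" and \<delta>: "\<forall>a\<in>{l..r}. \<forall>b\<in>{l..r}.
        a \<le> b \<longrightarrow> b - a < \<delta> \<longrightarrow> \<bar>F b - F a\<bar> \<le> \<epsilon> / 2 * (b - a)"
      using small[of "\<epsilon> / 2"] by auto
    have "dist ((F t - F s) / (t - s)) 0 < \<epsilon>"
      if "t \<in> {l..r}" "t \<noteq> s" "dist t s < \<delta>" for t
    proof -
      have "\<bar>F t - F s\<bar> \<le> \<epsilon> / 2 * \<bar>t - s\<bar>"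
      proof (cases "s \<le> t")
        case True
        then show ?thesis
          using \<delta> s that by (auto simp: dist_real_def)
      next
        case False
        then have "\<bar>F s - F t\<bar> \<le> \<epsilon> / 2 * (s - t)"
          using \<delta> s that by (auto simp: dist_real_def)
        then show ?thesis
          using False by (simp add: abs_minus_commute)
      qed
      then have "\<bar>(F t - F s) / (t - s)\<bar> \<le> \<epsilon> / 2"
        using that by (simp add: abs_divide divide_le_eq)
      then show ?thesis
        using \<open>\<epsilon> > 0\<close> unfolding dist_real_def by linarith
    qed
    then show "\<exists>\<delta>>0. \<forall>t\<in>{l..r}. t \<noteq> s \<and> dist t s < \<delta> \<longrightarrow> dist ((F t - F s) / (t - s)) 0 < \<epsilon>"
      using \<open>\<delta> > 0\<close> by blast
  qed
  then obtain C where "\<forall>s\<in>{l..r}. F s = C"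
    using has_field_derivative_zero_constant[OF convex_real_interval(5)] by blast
  then show ?thesis
    using assms(2) by auto
qed

(* There is no product rule for these merely absolutely continuous functions; freezing Q at b
   and Y at a turns the increment of P X + Q Y into an exact integral whose integrand is small
   on short intervals. *)
lemma primitive_on_product_increment:
  assumes X: "primitive_on T X (\<lambda>s. Y s * f s)"
    and Y: "primitive_on T Y (\<lambda>s. Y s * g s)"
    and Q: "primitive_on T Q (\<lambda>s. - (P * f s + Q s * g s))"
    and "0 \<le> a" "a \<le> b" "b \<le> T"
  shows "((\<lambda>s. P * f s * (Y s - Y a) + g s * Q b * (Y s - Y a) + g s * Y a * (Q b - Q s))
    has_integral (P * X b + Q b * Y b) - (P * X a + Q a * Y a)) {a..b}"
proof -
  have "((\<lambda>s. P * (Y s * f s) + Q b * (Y s * g s) + Y a * - (P * f s + Q s * g s))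
      has_integral P * (X b - X a) + Q b * (Y b - Y a) + Y a * (Q b - Q a)) {a..b}"
    using assms(4-6)
    by (intro has_integral_add has_integral_mult_right primitive_on_has_integral_interval[OF X]
        primitive_on_has_integral_interval[OF Y] primitive_on_has_integral_interval[OF Q]) auto
  moreover have "P * (X b - X a) + Q b * (Y b - Y a) + Y a * (Q b - Q a)
      = (P * X b + Q b * Y b) - (P * X a + Q a * Y a)"
    by (simp add: algebra_simps)
  ultimately show ?thesis
    by (auto simp: algebra_simps elim!: has_integral_eq[rotated])
qed

lemma abs_product_increment_integrand_le:
  fixes P f g Qb Ya dY dQ :: real
  assumes "\<bar>f\<bar> \<le> B" "\<bar>g\<bar> \<le> B" "\<bar>Qb\<bar> \<le> C" "\<bar>Ya\<bar> \<le> C" "\<bar>dY\<bar> \<le> \<eta>" "\<bar>dQ\<bar> \<le> \<eta>"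
  shows "\<bar>P * f * dY + g * Qb * dY + g * Ya * dQ\<bar> \<le> B * (\<bar>P\<bar> + 2 * C) * \<eta>"
proof -
  have "0 \<le> B" "0 \<le> C"
    using assms(1,3) abs_ge_zero[of f] abs_ge_zero[of Qb] by linarith+
  have "\<bar>P * f * dY + g * Qb * dY + g * Ya * dQ\<bar> \<le> \<bar>P * f * dY\<bar> + \<bar>g * Qb * dY\<bar> + \<bar>g * Ya * dQ\<bar>"
    by (rule order_trans[OF abs_triangle_ineq add_mono[OF abs_triangle_ineq order_refl]])
  also have "\<dots> \<le> \<bar>P\<bar> * B * \<eta> + B * C * \<eta> + B * C * \<eta>"
    unfolding abs_mult using assms \<open>0 \<le> B\<close> \<open>0 \<le> C\<close> by (intro add_mono mult_mono) auto
  also have "\<dots> = B * (\<bar>P\<bar> + 2 * C) * \<eta>"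
    by (simp add: algebra_simps)
  finally show ?thesis .
qed

lemma primitive_on_product_increments_small:
  fixes P B :: real
  assumes X: "primitive_on T X (\<lambda>s. Y s * f s)"
    and Y: "primitive_on T Y (\<lambda>s. Y s * g s)"
    and Q: "primitive_on T Q (\<lambda>s. - (P * f s + Q s * g s))"
    and bounded: "\<forall>s\<in>{0..T}. \<bar>f s\<bar> \<le> B \<and> \<bar>g s\<bar> \<le> B"
    and "0 \<le> T" "\<epsilon> > 0"
  obtains \<delta> where "\<delta> > 0" and "\<And>a b. 0 \<le> a \<Longrightarrow> a \<le> b \<Longrightarrow> b \<le> T \<Longrightarrow> b - a < \<delta> \<Longrightarrow>
    \<bar>(P * X b + Q b * Y b) - (P * X a + Q a * Y a)\<bar> \<le> \<epsilon> * (b - a)"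
proof -
  have cont: "continuous_on {0..T} (\<lambda>s. (Y s, Q s))"
    using continuous_on_primitive[OF Y] continuous_on_primitive[OF Q] by (intro continuous_intros)
  obtain C where "C > 0" and C: "\<forall>z\<in>(\<lambda>s. (Y s, Q s)) ` {0..T}. norm z \<le> C"
    using compact_imp_bounded[OF compact_continuous_image[OF cont compact_Icc]]
    unfolding bounded_pos by blast
  have "0 \<le> B"
    using bounded \<open>0 \<le> T\<close> abs_ge_zero[of "f 0"] by force
  define \<eta> where "\<eta> = \<epsilon> / (B * (\<bar>P\<bar> + 2 * C) + 1)"
  have "0 < B * (\<bar>P\<bar> + 2 * C) + 1"
    using \<open>0 \<le> B\<close> \<open>C > 0\<close> by (simp add: add_nonneg_pos)
  then have "\<eta> > 0" and \<eta>: "B * (\<bar>P\<bar> + 2 * C) * \<eta> \<le> \<epsilon>"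
    using \<open>\<epsilon> > 0\<close> by (simp_all add: \<eta>_def field_simps)
  obtain \<delta> where "\<delta> > 0" and \<delta>: "\<forall>s\<in>{0..T}. \<forall>s'\<in>{0..T}. dist s' s < \<delta> \<longrightarrow>
      dist (Y s', Q s') (Y s, Q s) < \<eta>"
    using compact_uniformly_continuous[OF cont compact_Icc] \<open>\<eta> > 0\<close>
    unfolding uniformly_continuous_on_def by metis
  show ?thesis
  proof (rule that[OF \<open>\<delta> > 0\<close>])
    fix a b assume ab: "0 \<le> a" "a \<le> b" "b \<le> T" "b - a < \<delta>"
    have "\<bar>P * f s * (Y s - Y a) + g s * Q b * (Y s - Y a) + g s * Y a * (Q b - Q s)\<bar> \<le> \<epsilon>"
      if s: "s \<in> {a..b}" for s
    proof -
      have "s \<in> {0..T}" "a \<in> {0..T}" "b \<in> {0..T}" "dist s a < \<delta>" "dist b s < \<delta>"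
        using s ab by (auto simp: dist_real_def)
      then have "dist (Y s, Q s) (Y a, Q a) < \<eta>" "dist (Y b, Q b) (Y s, Q s) < \<eta>"
          "norm (Y a, Q a) \<le> C" "norm (Y b, Q b) \<le> C"
        using \<delta> C by blast+
      then have "\<bar>Y s - Y a\<bar> \<le> \<eta>" "\<bar>Q b - Q s\<bar> \<le> \<eta>" "\<bar>Y a\<bar> \<le> C" "\<bar>Q b\<bar> \<le> C"
        using dist_fst_le[of "(Y s, Q s)" "(Y a, Q a)"] dist_snd_le[of "(Y b, Q b)" "(Y s, Q s)"]
          norm_fst_le[of "Y a" "Q a"] norm_snd_le[of "Q b" "Y b"]
        by (simp_all add: dist_real_def)
      with abs_product_increment_integrand_le bounded \<open>s \<in> {0..T}\<close> show ?thesis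
        by (meson \<eta> order_trans)
    qed
    then have "norm ((P * X b + Q b * Y b) - (P * X a + Q a * Y a)) \<le> \<epsilon> * measure lborel {a..b}"
      by (intro has_integral_bound_real[OF less_imp_le[OF \<open>\<epsilon> > 0\<close>] finite.emptyI
          primitive_on_product_increment[OF X Y Q ab(1-3)]]) simp
    then show "\<bar>(P * X b + Q b * Y b) - (P * X a + Q a * Y a)\<bar> \<le> \<epsilon> * (b - a)"
      using ab(2) by simp
  qed
qed

lemma primitive_on_first_integral:
  fixes P B :: real
  assumes X: "primitive_on T X (\<lambda>s. Y s * f s)"
    and Y: "primitive_on T Y (\<lambda>s. Y s * g s)"
    and Q: "primitive_on T Q (\<lambda>s. - (P * f s + Q s * g s))"
    and bounded: "\<forall>s\<in>{0..T}. \<bar>f s\<bar> \<le> B \<and> \<bar>g s\<bar> \<le> B"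
    and t: "t \<in> {0..T}"
  shows "P * X t + Q t * Y t = P * X 0 + Q 0 * Y 0"
proof -
  have "\<exists>\<delta>>0. \<forall>a\<in>{0..T}. \<forall>b\<in>{0..T}. a \<le> b \<longrightarrow> b - a < \<delta> \<longrightarrow>
      \<bar>(P * X b + Q b * Y b) - (P * X a + Q a * Y a)\<bar> \<le> \<epsilon> * (b - a)"
    if \<epsilon>: "\<epsilon> > 0" for \<epsilon>
  proof -
    obtain \<delta> where "\<delta> > 0" and "\<And>a b. 0 \<le> a \<Longrightarrow> a \<le> b \<Longrightarrow> b \<le> T \<Longrightarrow> b - a < \<delta> \<Longrightarrow>
        \<bar>(P * X b + Q b * Y b) - (P * X a + Q a * Y a)\<bar> \<le> \<epsilon> * (b - a)"
      using primitive_on_product_increments_small[OF X Y Q bounded _ \<epsilon>] t by auto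
    then show ?thesis
      by (intro exI[of _ \<delta>]) auto
  qed
  from constant_if_increments_small[of 0 T "\<lambda>t. P * X t + Q t * Y t", OF this t] show ?thesis .
qed

lemma AE_interval_imp_ex:
  fixes a b :: real
  assumes "AE t in lebesgue. t \<in> {a..b} \<longrightarrow> P t" "a < b"
  shows "\<exists>t\<in>{a..b}. P t"
proof (rule ccontr)
  assume "\<not> ?thesis"
  then have "AE t \<in> {a<..<b} in lebesgue. t \<in> {}"
    using assms(1) by (auto elim: eventually_mono)
  then show False
    using mem_closed_if_AE_lebesgue_open[of "{a<..<b}" "{}" "(a + b) / 2"] assms(2) by auto
qed

lemma AE_mem_closed_imp_mem:
  fixes w :: "real \<Rightarrow> 'a::metric_space"
  assumes "AE t in lebesgue. t \<in> {a..b} \<longrightarrow> w t \<in> K"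
    and "a < b" "continuous_on {a..b} w" "closed K" "t \<in> {a..b}"
  shows "w t \<in> K"
proof -
  let ?C = "{a..b} \<inter> w -` K"
  have "closed ?C"
    using continuous_closed_preimage[OF assms(3)] assms(4) by auto
  moreover have "{a<..<b} \<subseteq> ?C"
  proof
    fix s assume "s \<in> {a<..<b}"
    moreover have "AE s \<in> {a<..<b} in lebesgue. s \<in> ?C"
      using assms(1) by (auto elim: eventually_mono)
    ultimately show "s \<in> ?C"
      using mem_closed_if_AE_lebesgue_open[OF open_greaterThanLessThan \<open>closed ?C\<close>] by blast
  qed
  ultimately have "closure {a<..<b} \<subseteq> ?C"
    by (rule closure_minimal[rotated])
  then show ?thesis
    using assms(2,5) by auto
qed

lemma continuous_on_nonzero_sign:
  fixes f :: "'a::topological_space \<Rightarrow> real"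
  assumes "continuous_on S f" "connected S" "\<forall>t\<in>S. f t \<noteq> 0"
  shows "(\<forall>t\<in>S. 0 < f t) \<or> (\<forall>t\<in>S. f t < 0)"
proof (rule ccontr)
  assume "\<not> ?thesis"
  then obtain a b where "a \<in> S" "b \<in> S" "f a < 0" "0 < f b"
    using assms(3) by (meson linorder_neqE_linordered_idom)
  then have "0 \<in> f ` S"
    using connected_contains_Icc[OF connected_continuous_image[OF assms(1,2)], of "f a" "f b"] by auto
  then show False
    using assms(3) by auto
qed

lemma exists_inner_pos_if_zero_in_interior:
  fixes z :: "'a::real_inner"
  assumes "0 \<in> interior S" "z \<noteq> 0"
  shows "\<exists>v\<in>S. 0 < z \<bullet> v"
proof -
  obtain e where "e > 0" "ball 0 e \<subseteq> S"
    using assms(1) by (auto simp: mem_interior)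
  define v where "v = (e / (2 * norm z)) *\<^sub>R z"
  have "norm v = e / 2"
    using \<open>e > 0\<close> assms(2) by (simp add: v_def)
  then have "v \<in> S"
    using \<open>e > 0\<close> \<open>ball 0 e \<subseteq> S\<close> by auto
  moreover have "z \<bullet> v = e / 2 * norm z"
    using assms(2) by (simp add: v_def power2_norm_eq_inner[symmetric] power2_eq_square)
  moreover have "0 < e / 2 * norm z"
    using \<open>e > 0\<close> assms(2) by simp
  ultimately show ?thesis
    by metis
qed

lemma polar_eq_inner: "polar \<Omega> = {z. \<forall>v\<in>\<Omega>. z \<bullet> v \<le> 1}"
  by (auto simp: polar_def inner_prod_def)

lemma frontier_polarI:
  assumes "\<forall>v\<in>\<Omega>. z \<bullet> v \<le> 1" "v \<in> \<Omega>" "z \<bullet> v = 1"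
  shows "z \<in> frontier (polar \<Omega>)"
proof -
  have "z \<in> polar \<Omega>"
    using assms(1) by (simp add: polar_eq_inner)
  then have "z \<in> closure (polar \<Omega>)"
    using closure_subset by blast
  moreover have "z \<in> closure (- polar \<Omega>)"
    unfolding closure_sequential
  proof (intro exI conjI allI)
    fix n :: nat
    have "(1 + inverse (Suc n)) *\<^sub>R z \<bullet> v > 1"
      using assms(3) by simp
    then show "(1 + inverse (Suc n)) *\<^sub>R z \<in> - polar \<Omega>"
      using assms(2) by (auto simp: polar_eq_inner not_le)
  next
    show "(\<lambda>n. (1 + inverse (Suc n)) *\<^sub>R z) \<longlonglongrightarrow> z"
      using tendsto_scaleR[OF tendsto_add[OF tendsto_const[of 1] LIMSEQ_inverse_real_of_nat] tendsto_const[of z]]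
      by simp
  qed
  ultimately show ?thesis
    by (simp add: frontier_closures)
qed

lemma snd_maximizer_eq_Sup_Inf:
  fixes S :: "('a \<times> real) set"
  assumes "w \<in> S" "\<forall>v\<in>S. c * snd v \<le> c * snd w"
  shows "0 < c \<Longrightarrow> snd w = Sup (snd ` S)" and "c < 0 \<Longrightarrow> snd w = Inf (snd ` S)"
  using assms by (auto intro!: cSup_eq_maximum[symmetric] cInf_eq_minimum[symmetric] simp: mult_le_cancel_left)

lemma vertical_geodesic:
  assumes x: "primitive_on T x (\<lambda>s. y s * fst (u s))"
    and y: "primitive_on T y (\<lambda>s. y s * snd (u s))"
    and "AE t in lebesgue. t \<in> {0..T} \<longrightarrow> snd (u t) = M"
    and t: "t \<in> {0..T}"
  shows "x t = x 0 + y 0 * integral {0..t} (\<lambda>s. exp (M * s) * fst (u s)) \<and> y t = y 0 * exp (M * t)"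
proof -
  have "AE s in lebesgue. s \<in> {0..T} \<longrightarrow> y s * snd (u s) = M * y s"
    using assms(3) by (auto elim: eventually_mono)
  then have y_exp: "y s = y 0 * exp (M * s)" if "s \<in> {0..T}" for s
    using primitive_on_linear_imp_exp[OF primitive_on_cong_AE[OF y] that] by blast
  have "integral {0..t} (\<lambda>s. y s * fst (u s)) = integral {0..t} (\<lambda>s. y 0 * (exp (M * s) * fst (u s)))"
  proof (rule integral_cong)
    fix s assume "s \<in> {0..t}"
    then have "y s = y 0 * exp (M * s)"
      using t y_exp[of s] by simp
    then show "y s * fst (u s) = y 0 * (exp (M * s) * fst (u s))"
      by simp
  qed
  then show ?thesis
    using primitive_on_eq_integral[OF x t] y_exp[OF t] by simp
qed

lemma extremalD:
  assumes "extremal \<Omega> T u x y p q"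
  shows "\<forall>t\<in>{0..T}. u t \<in> \<Omega>" and "\<forall>t\<in>{0..T}. 0 < y t"
    and "primitive_on T x (\<lambda>s. y s * fst (u s))" and "primitive_on T y (\<lambda>s. y s * snd (u s))"
    and "\<forall>t\<in>{0..T}. p t = p 0"
    and "primitive_on T q (\<lambda>s. - (p s * fst (u s) + q s * snd (u s)))"
    and "\<forall>t\<in>{0..T}. (p t, q t) \<noteq> (0, 0)"
    and "AE t in lebesgue. t \<in> {0..T} \<longrightarrow>
      (\<forall>v\<in>\<Omega>. y t * (p t * fst v + q t * snd v) \<le> y t * (p t * fst (u t) + q t * snd (u t)))"
    and "\<exists>h\<ge>0. AE t in lebesgue. t \<in> {0..T} \<longrightarrow> y t * (p t * fst (u t) + q t * snd (u t)) = h"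
  using assms unfolding extremal_def primitive_on_def by - (elim conjE; assumption)+

context
  fixes \<Omega> :: "(real \<times> real) set" and T :: real
    and u :: "real \<Rightarrow> real \<times> real" and x y p q :: "real \<Rightarrow> real"
  assumes is_extremal: "extremal \<Omega> T u x y p q"
begin

lemma extremal_control_mem: "t \<in> {0..T} \<Longrightarrow> u t \<in> \<Omega>"
  using extremalD(1)[OF is_extremal] by blast

lemma extremal_y_pos: "t \<in> {0..T} \<Longrightarrow> 0 < y t"
  using extremalD(2)[OF is_extremal] by blast

lemmas extremal_primitive_x = extremalD(3)[OF is_extremal]
   and extremal_primitive_y = extremalD(4)[OF is_extremal]

lemma extremal_p_const: "t \<in> {0..T} \<Longrightarrow> p t = p 0"
  using extremalD(5)[OF is_extremal] by blast

lemma extremal_primitive_q: "primitive_on T q (\<lambda>s. - (p 0 * fst (u s) + q s * snd (u s)))"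
  unfolding primitive_on_def
proof
  fix t assume t: "t \<in> {0..T}"
  have "((\<lambda>s. - (p s * fst (u s) + q s * snd (u s))) has_integral (q t - q 0)) {0..t}"
    using extremalD(6)[OF is_extremal] t unfolding primitive_on_def by blast
  moreover have "- (p s * fst (u s) + q s * snd (u s)) = - (p 0 * fst (u s) + q s * snd (u s))"
    if "s \<in> {0..t}" for s
    using extremal_p_const[of s] t that by simp
  ultimately show "((\<lambda>s. - (p 0 * fst (u s) + q s * snd (u s))) has_integral (q t - q 0)) {0..t}"
    by (rule has_integral_eq[rotated])
qed

lemma extremal_covector_nonzero:
  assumes "t \<in> {0..T}"
  shows "(p 0, q t) \<noteq> 0"
  using extremalD(7)[OF is_extremal] extremal_p_const[OF assms] assms by (auto simp: zero_prod_def)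

lemma extremal_maximum_principle:
  "AE t in lebesgue. t \<in> {0..T} \<longrightarrow>
     (\<forall>v\<in>\<Omega>. y t * ((p 0, q t) \<bullet> v) \<le> y t * ((p 0, q t) \<bullet> u t))"
proof -
  have "AE t in lebesgue. t \<in> {0..T} \<longrightarrow>
     (\<forall>v\<in>\<Omega>. y t * (p t * fst v + q t * snd v) \<le> y t * (p t * fst (u t) + q t * snd (u t)))"
    by (rule extremalD(8)[OF is_extremal])
  then show ?thesis
  proof (rule eventually_mono, intro impI)
    fix t assume "t \<in> {0..T} \<longrightarrow>
        (\<forall>v\<in>\<Omega>. y t * (p t * fst v + q t * snd v) \<le> y t * (p t * fst (u t) + q t * snd (u t)))"
      and t: "t \<in> {0..T}"
    then show "\<forall>v\<in>\<Omega>. y t * ((p 0, q t) \<bullet> v) \<le> y t * ((p 0, q t) \<bullet> u t)"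
      using extremal_p_const[OF t] by (simp add: inner_prod_def)
  qed
qed

lemma extremal_Hamiltonian_constant:
  obtains h where "AE t in lebesgue. t \<in> {0..T} \<longrightarrow> y t * ((p 0, q t) \<bullet> u t) = h"
proof -
  obtain h where "AE t in lebesgue. t \<in> {0..T} \<longrightarrow> y t * (p t * fst (u t) + q t * snd (u t)) = h"
    using extremalD(9)[OF is_extremal] by blast
  then have "AE t in lebesgue. t \<in> {0..T} \<longrightarrow> y t * ((p 0, q t) \<bullet> u t) = h"
  proof (rule eventually_mono, intro impI)
    fix t assume "t \<in> {0..T} \<longrightarrow> y t * (p t * fst (u t) + q t * snd (u t)) = h" "t \<in> {0..T}"
    then show "y t * ((p 0, q t) \<bullet> u t) = h"
      using extremal_p_const[of t] by (simp add: inner_prod_def)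
  qed
  then show ?thesis
    by (rule that)
qed

lemma extremal_vertical_control:
  assumes "p 0 = 0"
  shows "(AE t in lebesgue. t \<in> {0..T} \<longrightarrow> snd (u t) = Sup (snd ` \<Omega>))
    \<or> (AE t in lebesgue. t \<in> {0..T} \<longrightarrow> snd (u t) = Inf (snd ` \<Omega>))"
proof -
  have max: "AE t in lebesgue. t \<in> {0..T} \<longrightarrow> (\<forall>v\<in>\<Omega>. y t * q t * snd v \<le> y t * q t * snd (u t))"
    using extremal_maximum_principle by (rule eventually_mono) (simp add: assms inner_prod_def mult.assoc)
  have "\<forall>t\<in>{0..T}. q t \<noteq> 0"
    using extremal_covector_nonzero assms by (auto simp: zero_prod_def)
  then consider "\<forall>t\<in>{0..T}. 0 < q t" | "\<forall>t\<in>{0..T}. q t < 0"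
    using continuous_on_nonzero_sign[OF continuous_on_primitive[OF extremal_primitive_q] connected_Icc]
    by blast
  then show ?thesis
  proof cases
    case 1
    have "AE t in lebesgue. t \<in> {0..T} \<longrightarrow> snd (u t) = Sup (snd ` \<Omega>)"
      using max
    proof (rule eventually_mono, intro impI)
      fix t assume "t \<in> {0..T} \<longrightarrow> (\<forall>v\<in>\<Omega>. y t * q t * snd v \<le> y t * q t * snd (u t))" "t \<in> {0..T}"
      then show "snd (u t) = Sup (snd ` \<Omega>)"
        using snd_maximizer_eq_Sup_Inf(1)[of "u t" \<Omega> "y t * q t"] extremal_control_mem[of t]
          extremal_y_pos[of t] 1 by simp
    qed
    then show ?thesis ..
  next
    case 2
    have "AE t in lebesgue. t \<in> {0..T} \<longrightarrow> snd (u t) = Inf (snd ` \<Omega>)"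
      using max
    proof (rule eventually_mono, intro impI)
      fix t assume "t \<in> {0..T} \<longrightarrow> (\<forall>v\<in>\<Omega>. y t * q t * snd v \<le> y t * q t * snd (u t))" "t \<in> {0..T}"
      then show "snd (u t) = Inf (snd ` \<Omega>)"
        using snd_maximizer_eq_Sup_Inf(2)[of "u t" \<Omega> "y t * q t"] extremal_control_mem[of t]
          extremal_y_pos[of t] 2 by (simp add: mult_pos_neg)
    qed
    then show ?thesis ..
  qed
qed

lemma extremal_Hamiltonian_pos:
  assumes "0 \<in> interior \<Omega>" "0 < T"
  obtains h where "0 < h" "AE t in lebesgue. t \<in> {0..T} \<longrightarrow>
    (\<forall>v\<in>\<Omega>. y t * ((p 0, q t) \<bullet> v) \<le> h) \<and> y t * ((p 0, q t) \<bullet> u t) = h"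
proof -
  obtain h where H: "AE t in lebesgue. t \<in> {0..T} \<longrightarrow> y t * ((p 0, q t) \<bullet> u t) = h"
    by (rule extremal_Hamiltonian_constant)
  have AE_h: "AE t in lebesgue. t \<in> {0..T} \<longrightarrow>
      (\<forall>v\<in>\<Omega>. y t * ((p 0, q t) \<bullet> v) \<le> h) \<and> y t * ((p 0, q t) \<bullet> u t) = h"
    using eventually_conj[OF extremal_maximum_principle H]
  proof (rule eventually_mono, intro impI)
    fix t assume "(t \<in> {0..T} \<longrightarrow> (\<forall>v\<in>\<Omega>. y t * ((p 0, q t) \<bullet> v) \<le> y t * ((p 0, q t) \<bullet> u t)))
      \<and> (t \<in> {0..T} \<longrightarrow> y t * ((p 0, q t) \<bullet> u t) = h)" and "t \<in> {0..T}"
    then show "(\<forall>v\<in>\<Omega>. y t * ((p 0, q t) \<bullet> v) \<le> h) \<and> y t * ((p 0, q t) \<bullet> u t) = h"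
      by metis
  qed
  obtain t0 where t0: "t0 \<in> {0..T}" "\<forall>v\<in>\<Omega>. y t0 * ((p 0, q t0) \<bullet> v) \<le> h"
    using AE_interval_imp_ex[OF AE_h assms(2)] by blast
  obtain v where "v \<in> \<Omega>" "0 < (p 0, q t0) \<bullet> v"
    using exists_inner_pos_if_zero_in_interior[OF assms(1) extremal_covector_nonzero[OF t0(1)]] by blast
  then have "0 < h"
    using t0 mult_pos_pos[OF extremal_y_pos[OF t0(1)]] by (meson less_le_trans)
  then show ?thesis
    using AE_h that by blast
qed

lemma extremal_covector_in_frontier:
  assumes "0 < T" "0 < h"
    and AE_h: "AE t in lebesgue. t \<in> {0..T} \<longrightarrow>
      (\<forall>v\<in>\<Omega>. y t * ((p 0, q t) \<bullet> v) \<le> h) \<and> y t * ((p 0, q t) \<bullet> u t) = h"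
    and t: "t \<in> {0..T}"
  shows "(y t / h) *\<^sub>R (p 0, q t) \<in> frontier (polar \<Omega>)"
proof -
  have cont: "continuous_on {0..T} (\<lambda>t. (y t / h) *\<^sub>R (p 0, q t))"
    using continuous_on_primitive[OF extremal_primitive_y] continuous_on_primitive[OF extremal_primitive_q]
      \<open>0 < h\<close> by (intro continuous_intros) auto
  have "AE t in lebesgue. t \<in> {0..T} \<longrightarrow> (y t / h) *\<^sub>R (p 0, q t) \<in> frontier (polar \<Omega>)"
    using AE_h
  proof (rule eventually_mono, intro impI)
    fix t assume "t \<in> {0..T} \<longrightarrow>
      (\<forall>v\<in>\<Omega>. y t * ((p 0, q t) \<bullet> v) \<le> h) \<and> y t * ((p 0, q t) \<bullet> u t) = h" and t: "t \<in> {0..T}"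
    then have le: "\<forall>v\<in>\<Omega>. y t * ((p 0, q t) \<bullet> v) \<le> h" and eq: "y t * ((p 0, q t) \<bullet> u t) = h"
      by auto
    have scaled: "(y t / h) *\<^sub>R (p 0, q t) \<bullet> v = y t * ((p 0, q t) \<bullet> v) / h" for v
      unfolding inner_scaleR_left by simp
    show "(y t / h) *\<^sub>R (p 0, q t) \<in> frontier (polar \<Omega>)"
    proof (rule frontier_polarI)
      show "\<forall>v\<in>\<Omega>. (y t / h) *\<^sub>R (p 0, q t) \<bullet> v \<le> 1"
        using le \<open>0 < h\<close> unfolding scaled by simp
      show "u t \<in> \<Omega>"
        using extremal_control_mem[OF t] .
      show "(y t / h) *\<^sub>R (p 0, q t) \<bullet> u t = 1"
        using eq \<open>0 < h\<close> unfolding scaled by simp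
    qed
  qed
  then show ?thesis
    using AE_mem_closed_imp_mem[OF _ assms(1) cont frontier_closed t] by blast
qed

lemma extremal_first_integral:
  assumes "bounded \<Omega>" "t \<in> {0..T}"
  shows "p 0 * x t + q t * y t = p 0 * x 0 + q 0 * y 0"
proof -
  obtain B where B: "\<forall>v\<in>\<Omega>. norm v \<le> B"
    using assms(1) unfolding bounded_iff by blast
  have bound: "\<bar>fst (u s)\<bar> \<le> B \<and> \<bar>snd (u s)\<bar> \<le> B" if "s \<in> {0..T}" for s
  proof -
    have "norm (u s) \<le> B"
      using B extremal_control_mem[OF that] by blast
    moreover have "\<bar>fst (u s)\<bar> \<le> norm (u s)" "\<bar>snd (u s)\<bar> \<le> norm (u s)"
      using norm_fst_le[of "fst (u s)" "snd (u s)"] norm_snd_le[of "snd (u s)" "fst (u s)"] by simp_all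
    ultimately show ?thesis
      by linarith
  qed
  show ?thesis
    by (rule primitive_on_first_integral[OF extremal_primitive_x extremal_primitive_y extremal_primitive_q _ assms(2)])
      (use bound in blast)
qed

lemma extremal_x_eq:
  assumes "bounded \<Omega>" "p 0 \<noteq> 0" "t \<in> {0..T}"
  shows "x t - (x 0 + q 0 * y 0 / p 0) = - (q t * y t) / p 0"
proof -
  have "(x t - (x 0 + q 0 * y 0 / p 0)) * p 0 = - (q t * y t)"
    using extremal_first_integral[OF assms(1,3)] assms(2) by (simp add: algebra_simps)
  then show ?thesis
    using assms(2) by (metis nonzero_mult_div_cancel_right)
qed

lemma extremal_cross_product:
  assumes "bounded \<Omega>" "p 0 \<noteq> 0" "t \<in> {0..T}" "y t * ((p 0, q t) \<bullet> u t) = h"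
  defines "c \<equiv> x 0 + q 0 * y 0 / p 0"
  shows "(x t - c) * (y t * snd (u t)) - y t * (y t * fst (u t)) = - y t * h / p 0"
proof -
  have "x t - c = - (q t * y t) / p 0"
    unfolding c_def by (rule extremal_x_eq[OF assms(1-3)])
  then have "(x t - c) * (y t * snd (u t)) - y t * (y t * fst (u t))
      = - (q t * y t) / p 0 * (y t * snd (u t)) - y t * (y t * fst (u t))"
    by (simp only:)
  also have "\<dots> = - y t * (y t * ((p 0, q t) \<bullet> u t)) / p 0"
    using assms(2) by (simp add: inner_prod_def field_simps)
  finally show ?thesis
    unfolding assms(4) .
qed

lemma extremal_horizontal:
  assumes "0 \<in> interior \<Omega>" "bounded \<Omega>" "0 < T" "p 0 \<noteq> 0"
  shows "\<exists>\<sigma> \<in> {1, -1}. \<exists>k > 0. \<exists>c.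
    (\<forall>t\<in>{0..T}. (x t - c, y t) \<in> (\<lambda>w. k *\<^sub>R rot90 \<sigma> w) ` frontier (polar \<Omega>)) \<and>
    (AE t in lebesgue. t \<in> {0..T} \<longrightarrow>
       \<sigma> * ((x t - c) * (y t * snd (u t)) - y t * (y t * fst (u t))) < 0)"
proof -
  obtain h where "0 < h" and AE_h: "AE t in lebesgue. t \<in> {0..T} \<longrightarrow>
      (\<forall>v\<in>\<Omega>. y t * ((p 0, q t) \<bullet> v) \<le> h) \<and> y t * ((p 0, q t) \<bullet> u t) = h"
    by (rule extremal_Hamiltonian_pos[OF assms(1,3)])
  define \<sigma> where "\<sigma> = sgn (p 0)"
  define k where "k = h / \<bar>p 0\<bar>"
  define c where "c = x 0 + q 0 * y 0 / p 0"
  have \<sigma>: "\<sigma> \<in> {1, -1}" "\<sigma> / p 0 = 1 / \<bar>p 0\<bar>" "k * \<sigma> = h / p 0"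
    using assms(4) by (auto simp: \<sigma>_def k_def sgn_if)
  have "(x t - c, y t) \<in> (\<lambda>w. k *\<^sub>R rot90 \<sigma> w) ` frontier (polar \<Omega>)" if t: "t \<in> {0..T}" for t
  proof (rule image_eqI)
    show "(y t / h) *\<^sub>R (p 0, q t) \<in> frontier (polar \<Omega>)"
      by (rule extremal_covector_in_frontier[OF assms(3) \<open>0 < h\<close> AE_h t])
    have "k *\<^sub>R rot90 \<sigma> ((y t / h) *\<^sub>R (p 0, q t)) = (k * \<sigma> * (- (q t * y t) / h), k * \<sigma> * (p 0 * y t / h))"
      by (simp add: rot90_def algebra_simps)
    also have "\<dots> = (x t - c, y t)"
      using extremal_x_eq[OF assms(2,4) t] \<open>0 < h\<close> assms(4) by (simp add: c_def \<sigma>(3))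
    finally show "(x t - c, y t) = k *\<^sub>R rot90 \<sigma> ((y t / h) *\<^sub>R (p 0, q t))" ..
  qed
  moreover have "AE t in lebesgue. t \<in> {0..T} \<longrightarrow>
      \<sigma> * ((x t - c) * (y t * snd (u t)) - y t * (y t * fst (u t))) < 0"
    using AE_h
  proof (rule eventually_mono, intro impI)
    fix t assume "t \<in> {0..T} \<longrightarrow>
      (\<forall>v\<in>\<Omega>. y t * ((p 0, q t) \<bullet> v) \<le> h) \<and> y t * ((p 0, q t) \<bullet> u t) = h" and t: "t \<in> {0..T}"
    then have "\<sigma> * ((x t - c) * (y t * snd (u t)) - y t * (y t * fst (u t))) = - (y t * h) * (\<sigma> / p 0)"
      using extremal_cross_product[OF assms(2,4) t, of h] unfolding c_def by simp
    then show "\<sigma> * ((x t - c) * (y t * snd (u t)) - y t * (y t * fst (u t))) < 0"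
      using extremal_y_pos[OF t] \<open>0 < h\<close> assms(4) by (simp add: \<sigma>(2))
  qed
  moreover have "k > 0"
    using \<open>0 < h\<close> assms(4) by (simp add: k_def)
  ultimately show ?thesis
    using \<sigma>(1) by blast
qed

end

theorem theorem1:
  fixes \<Omega> :: "(real \<times> real) set" and T :: real
    and u :: "real \<Rightarrow> real \<times> real" and x y p q :: "real \<Rightarrow> real"
  assumes "convex \<Omega>" and "compact \<Omega>" and "(0, 0) \<in> interior \<Omega>"
    and "T > 0"
    and "extremal \<Omega> T u x y p q"
  shows
    "(\<exists>\<sigma> \<in> {1, -1}. \<exists>k > 0. \<exists>c.
        (\<forall>t\<in>{0..T}. (x t - c, y t) \<in> (\<lambda>w. k *\<^sub>R rot90 \<sigma> w) ` frontier (polar \<Omega>)) \<and>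
        (AE t in lebesgue. t \<in> {0..T} \<longrightarrow>
           \<sigma> * ((x t - c) * (y t * snd (u t)) - y t * (y t * fst (u t))) < 0))
   \<or> (let M = Sup (snd ` \<Omega>) in
        (AE t in lebesgue. t \<in> {0..T} \<longrightarrow> snd (u t) = M) \<and>
        (\<forall>t\<in>{0..T}. x t = x 0 + y 0 * integral {0..t} (\<lambda>s. exp (M * s) * fst (u s)) \<and>
                     y t = y 0 * exp (M * t)))
   \<or> (let m = Inf (snd ` \<Omega>) in
        (AE t in lebesgue. t \<in> {0..T} \<longrightarrow> snd (u t) = m) \<and>
        (\<forall>t\<in>{0..T}. x t = x 0 + y 0 * integral {0..t} (\<lambda>s. exp (m * s) * fst (u s)) \<and>
                     y t = y 0 * exp (m * t)))"
proof -
  have "0 \<in> interior \<Omega>" "bounded \<Omega>"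
    using assms(2,3) compact_imp_bounded by (auto simp: zero_prod_def)
  show ?thesis
  proof (cases "p 0 = 0")
    case True
    have geodesic: "\<forall>t\<in>{0..T}. x t = x 0 + y 0 * integral {0..t} (\<lambda>s. exp (M * s) * fst (u s))
        \<and> y t = y 0 * exp (M * t)"
      if "AE t in lebesgue. t \<in> {0..T} \<longrightarrow> snd (u t) = M" for M
      using vertical_geodesic[OF extremal_primitive_x[OF assms(5)] extremal_primitive_y[OF assms(5)] that]
      by blast
    from extremal_vertical_control[OF assms(5) True] show ?thesis
    proof
      assume "AE t in lebesgue. t \<in> {0..T} \<longrightarrow> snd (u t) = Sup (snd ` \<Omega>)"
      with geodesic[OF this] show ?thesis
        unfolding Let_def by blast
    next
      assume "AE t in lebesgue. t \<in> {0..T} \<longrightarrow> snd (u t) = Inf (snd ` \<Omega>)"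
      with geodesic[OF this] show ?thesis
        unfolding Let_def by blast
    qed
  next
    case False
    with extremal_horizontal[OF assms(5) \<open>0 \<in> interior \<Omega>\<close> \<open>bounded \<Omega>\<close> assms(4)] show ?thesis
      by blast
  qed
qed

end
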